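(* Let $(\mathfrak{g},\langle\cdot,\cdot\rangle)$ be a completely solvable unimodular Lorentzian Lie algebra such that the derived algebra $[\mathfrak{g},\mathfrak{g}]$ is degenerate (the restriction of $\langle\cdot,\cdot\rangle$ to it is degenerate). Then $\mathfrak{g}$ is Einstein if and only if it is (isometrically isomorphic to a Lorentzian Lie algebra) obtained by a double extension process from an abelian Euclidean Lie algebra with admissible parameters $(K,D,-\mathrm{tr}(D),b)$. In particular, if $\mathfrak{g}$ is Einstein then it is Ricci-flat.
   Context: A Lorentzian Lie algebra is a finite-dimensional real Lie algebra with a nondegenerate symmetric bilinear form of signature $(1,n-1)$. $\mathfrak{g}$ is completely solvable if there is a chain of ideals $0=I_0\subset I_1\subset\cdots\subset I_n=\mathfrak{g}$ with $\dim I_i=i$; unimodular means $\mathrm{tr}(\mathrm{ad}_u)=0$ for all $u$. Double extension of a Euclidean Lie algebra $(\mathfrak{g}_0,[\cdot,\cdot]_0,\langle\cdot,\cdot\rangle_0)$ with parameters $(K,D,\mu,b)$ ($K,D$ endomorphisms of $\mathfrak{g}_0$, $K$ skew-symmetric, $\mu\in\mathbb{R}$, $b\in\mathfrak{g}_0$): $\mathfrak{g}=\mathbb{R}e\oplus\mathfrak{g}_0\oplus\mathbb{R}\bar e$ with $\langle e,e\rangle=\langle\bar e,\bar e\rangle=0$, $\langle e,\bar e\rangle=1$, $\mathfrak{g}_0\perp\{e,\bar e\}$, $\langle\cdot,\cdot\rangle|_{\mathfrak{g}_0}=\langle\cdot,\cdot\rangle_0$, and skew-symmetric bracket $[\bar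 e,e]=\mu e$, $[\bar e,u]=D(u)+\langle b,u\rangle_0e$, $[u,v]=[u,v]_0+\langle K(u),v\rangle_0e$, $[e,u]=0$ ($u,v\in\mathfrak{g}_0$). For $\mathfrak{g}_0$ abelian, the parameters are called admissible when this bracket is a Lie bracket and the resulting Lorentzian Lie algebra is Einstein; equivalently, $KD+D^*K=\mu K$ and $4\mu\,\mathrm{tr}(D)-2\mathrm{tr}(D^2)-2\mathrm{tr}(DD^* )-\mathrm{tr}(K^2)=0$ (adjoints with respect to $\langle\cdot,\cdot\rangle_0$). Einstein means the Ricci operator $\mathrm{Ric}$ of the Levi-Civita connection (given by $2\langle \mathrm{L}_uv,w\rangle=\langle[u,v],w\rangle+\langle[w,u],v\rangle+\langle[w,v],u\rangle$, curvature $\mathrm{L}_{[u,v]}-[\mathrm{L}_u,\mathrm{L}_v]$, $\langle\mathrm{Ric}(u),v\rangle=\mathrm{tr}(w\mapsto K(u,w)v)$) equals $\lambda\mathrm{Id}$ for some $\lambda$; Ricci-flat means $\mathrm{Ric}=0$. *)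

theory Defs
  imports "HOL-Analysis.Analysis"
begin

text \<open>A finite-dimensional real Lie algebra is modelled on a Euclidean-space type 'v
 (used only as a finite-dimensional real vector space; its built-in inner product
 plays no role except for computing traces, which are basis independent).\<close>

definition lin_trace :: "('v::euclidean_space \<Rightarrow> 'v) \<Rightarrow> real" where
  "lin_trace f = (\<Sum>b\<in>Basis. inner (f b) b)"

definition lie_bracket :: "('v::euclidean_space \<Rightarrow> 'v \<Rightarrow> 'v) \<Rightarrow> bool" where
  "lie_bracket br \<longleftrightarrow> bilinear br \<and> (\<forall>x y. br x y = - br y x)
     \<and> (\<forall>x y z. br x (br y z) + br y (br z x) + br z (br x y) = 0)"

definition nondegenerate_form :: "('v::euclidean_space \<Rightarrow> 'v \<Rightarrow> real) \<Rightarrow> bool" where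
  "nondegenerate_form g \<longleftrightarrow> (\<forall>x. (\<forall>y. g x y = 0) \<longrightarrow> x = 0)"

definition lorentzian_form :: "('v::euclidean_space \<Rightarrow> 'v \<Rightarrow> real) \<Rightarrow> bool" where
  "lorentzian_form g \<longleftrightarrow> bilinear g \<and> (\<forall>x y. g x y = g y x) \<and> nondegenerate_form g
     \<and> (\<exists>t. g t t < 0 \<and> (\<forall>x. g x t = 0 \<and> x \<noteq> 0 \<longrightarrow> g x x > 0))"

definition lorentzian_lie_algebra ::
  "('v::euclidean_space \<Rightarrow> 'v \<Rightarrow> 'v) \<Rightarrow> ('v \<Rightarrow> 'v \<Rightarrow> real) \<Rightarrow> bool" where
  "lorentzian_lie_algebra br g \<longleftrightarrow> lie_bracket br \<and> lorentzian_form g"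

definition lie_ideal :: "('v::euclidean_space \<Rightarrow> 'v \<Rightarrow> 'v) \<Rightarrow> 'v set \<Rightarrow> bool" where
  "lie_ideal br I \<longleftrightarrow> subspace I \<and> (\<forall>x y. y \<in> I \<longrightarrow> br x y \<in> I)"

definition completely_solvable :: "('v::euclidean_space \<Rightarrow> 'v \<Rightarrow> 'v) \<Rightarrow> bool" where
  "completely_solvable br \<longleftrightarrow> (\<exists>I :: nat \<Rightarrow> 'v set.
     (\<forall>i\<le>DIM('v). lie_ideal br (I i) \<and> dim (I i) = i)
     \<and> (\<forall>i<DIM('v). I i \<subseteq> I (Suc i)))"

definition unimodular :: "('v::euclidean_space \<Rightarrow> 'v \<Rightarrow> 'v) \<Rightarrow> bool" where
  "unimodular br \<longleftrightarrow> (\<forall>u. lin_trace (br u) = 0)"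

definition derived_algebra :: "('v::euclidean_space \<Rightarrow> 'v \<Rightarrow> 'v) \<Rightarrow> 'v set" where
  "derived_algebra br = span {br x y | x y. True}"

definition degenerate_on :: "('v::euclidean_space \<Rightarrow> 'v \<Rightarrow> real) \<Rightarrow> 'v set \<Rightarrow> bool" where
  "degenerate_on g S \<longleftrightarrow> (\<exists>x\<in>S. x \<noteq> 0 \<and> (\<forall>y\<in>S. g x y = 0))"

definition levi_civita ::
  "('v::euclidean_space \<Rightarrow> 'v \<Rightarrow> 'v) \<Rightarrow> ('v \<Rightarrow> 'v \<Rightarrow> real) \<Rightarrow> 'v \<Rightarrow> 'v \<Rightarrow> 'v" where
  "levi_civita br g u v = (THE z. \<forall>w. 2 * g z w = g (br u v) w + g (br w u) v + g (br w v) u)"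

definition curvature ::
  "('v::euclidean_space \<Rightarrow> 'v \<Rightarrow> 'v) \<Rightarrow> ('v \<Rightarrow> 'v \<Rightarrow> real) \<Rightarrow> 'v \<Rightarrow> 'v \<Rightarrow> 'v \<Rightarrow> 'v" where
  "curvature br g u v w = (let L = levi_civita br g in
      L (br u v) w - (L u (L v w) - L v (L u w)))"

definition ricci_form ::
  "('v::euclidean_space \<Rightarrow> 'v \<Rightarrow> 'v) \<Rightarrow> ('v \<Rightarrow> 'v \<Rightarrow> real) \<Rightarrow> 'v \<Rightarrow> 'v \<Rightarrow> real" where
  "ricci_form br g u v = lin_trace (\<lambda>w. curvature br g u w v)"

text \<open>Ric = \<lambda> Id, expressed through the (nondegenerate) metric: <Ric u, v> = \<lambda> <u,v>.\<close>
definition einstein :: "('v::euclidean_space \<Rightarrow> 'v \<Rightarrow> 'v) \<Rightarrow> ('v \<Rightarrow> 'v \<Rightarrow> real) \<Rightarrow> bool" where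
  "einstein br g \<longleftrightarrow> (\<exists>c::real. \<forall>u v. ricci_form br g u v = c * g u v)"

definition ricci_flat :: "('v::euclidean_space \<Rightarrow> 'v \<Rightarrow> 'v) \<Rightarrow> ('v \<Rightarrow> 'v \<Rightarrow> real) \<Rightarrow> bool" where
  "ricci_flat br g \<longleftrightarrow> (\<forall>u v. ricci_form br g u v = 0)"

text \<open>Double extension of the abelian Euclidean Lie algebra 'w (inner product = \<bullet>).
 An element (a, u, c) stands for a e + u + c \<bar>e.\<close>
definition dext_bracket ::
  "('w::euclidean_space \<Rightarrow> 'w) \<Rightarrow> ('w \<Rightarrow> 'w) \<Rightarrow> real \<Rightarrow> 'w
    \<Rightarrow> real \<times> 'w \<times> real \<Rightarrow> real \<times> 'w \<times> real \<Rightarrow> real \<times> 'w \<times> real" where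
  "dext_bracket K D \<mu> b x y = (case x of (a1, u1, c1) \<Rightarrow> case y of (a2, u2, c2) \<Rightarrow>
     (\<mu> * (c1 * a2 - a1 * c2) + c1 * inner b u2 - c2 * inner b u1 + inner (K u1) u2,
      c1 *\<^sub>R D u2 - c2 *\<^sub>R D u1,
      0))"

definition dext_form ::
  "real \<times> ('w::euclidean_space) \<times> real \<Rightarrow> real \<times> 'w \<times> real \<Rightarrow> real" where
  "dext_form x y = (case x of (a1, u1, c1) \<Rightarrow> case y of (a2, u2, c2) \<Rightarrow>
     a1 * c2 + c1 * a2 + inner u1 u2)"

definition admissible ::
  "('w::euclidean_space \<Rightarrow> 'w) \<Rightarrow> ('w \<Rightarrow> 'w) \<Rightarrow> real \<Rightarrow> 'w \<Rightarrow> bool" where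
  "admissible K D \<mu> b \<longleftrightarrow> linear K \<and> linear D \<and> (\<forall>u v. inner (K u) v = - inner u (K v))
     \<and> lie_bracket (dext_bracket K D \<mu> b) \<and> einstein (dext_bracket K D \<mu> b) dext_form"

definition isometric_lie_iso ::
  "('v::euclidean_space \<Rightarrow> 'v \<Rightarrow> 'v) \<Rightarrow> ('v \<Rightarrow> 'v \<Rightarrow> real)
   \<Rightarrow> ('u::euclidean_space \<Rightarrow> 'u \<Rightarrow> 'u) \<Rightarrow> ('u \<Rightarrow> 'u \<Rightarrow> real) \<Rightarrow> ('v \<Rightarrow> 'u) \<Rightarrow> bool" where
  "isometric_lie_iso br g br' g' \<phi> \<longleftrightarrow> linear \<phi> \<and> bij \<phi>
     \<and> (\<forall>x y. \<phi> (br x y) = br' (\<phi> x) (\<phi> y)) \<and> (\<forall>x y. g' (\<phi> x) (\<phi> y) = g x y)"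

end

(* If the derived algebra is degenerate, it contains a null vector e orthogonal to it. A Witt frame
   through e identifies the Lorentzian Lie algebra isometrically with R e + g0 + R ebar carrying the
   double-extension form, in such a way that no bracket has an ebar-component. For unimodular metric
   Lie algebras
     Ric(u,v) = - B(v,u)/2 - (1/2) sum <[u,e_i],[v,e^i]> + (1/4) sum <[e_i,e_j],u> <[e^i,e^j],v>,
   with B the Killing form, which complete solvability makes positive semidefinite (each ad x is
   triangular in a flag of ideals). If Ric = c <,>, then Ric(e,e) = 0 forces B(e,e) = 0, hence
   B(e,-) = 0, and [e,g0] has no g0-component; Ric(e,ebar) = c gives c = |w|^2/2 for the
   g0-component w of [e,ebar]; and the trace of Ric over g0, which is n c >= 0, is a sum of
   nonpositive terms. So c = 0, w = 0 and all g0-components of [g0,g0] vanish; unimodularity then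
   kills [e,g0], and what remains is exactly a double-extension bracket with mu = - tr D. The
   converse holds because the Ricci form is transported by isometric isomorphisms. *)

theory Submission
  imports Defs
begin

section \<open>Bilinear maps, traces and the Killing form\<close>

locale bilinear_map =
  fixes h :: "'a::real_vector \<Rightarrow> 'b::real_vector \<Rightarrow> 'c::real_vector"
  assumes bilinear: "bilinear h"
begin

lemma linear_left: "linear (\<lambda>x. h x y)" and linear_right: "linear (\<lambda>y. h x y)"
  using bilinear by (simp_all add: bilinear_def)

lemma add_left [simp]: "h (x + y) z = h x z + h y z" using bilinear by (rule bilinear_ladd)
lemma add_right [simp]: "h z (x + y) = h z x + h z y" using bilinear by (rule bilinear_radd)
lemma diff_left [simp]: "h (x - y) z = h x z - h y z" using bilinear by (rule bilinear_lsub)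
lemma diff_right [simp]: "h z (x - y) = h z x - h z y" using bilinear by (rule bilinear_rsub)
lemma scale_left [simp]: "h (c *\<^sub>R x) z = c *\<^sub>R h x z" using bilinear by (rule bilinear_lmul)
lemma scale_right [simp]: "h z (c *\<^sub>R x) = c *\<^sub>R h z x" using bilinear by (rule bilinear_rmul)
lemma neg_left [simp]: "h (- x) z = - h x z" using bilinear by (rule bilinear_lneg)
lemma neg_right [simp]: "h z (- x) = - h z x" using bilinear by (rule bilinear_rneg)
lemma zero_left [simp]: "h 0 z = 0" using bilinear by (rule bilinear_lzero)
lemma zero_right [simp]: "h z 0 = 0" using bilinear by (rule bilinear_rzero)
lemma sum_left: "h (sum f A) z = (\<Sum>a\<in>A. h (f a) z)" using linear_left by (rule linear_sum)
lemma sum_right: "h z (sum f A) = (\<Sum>a\<in>A. h z (f a))" using linear_right by (rule linear_sum)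

lemma linear_postcomp_left: "linear f \<Longrightarrow> linear (\<lambda>x. f (h x y))"
  using linear_compose[OF linear_left] by (simp add: o_def)
lemma linear_postcomp_right: "linear f \<Longrightarrow> linear (\<lambda>y. f (h x y))"
  using linear_compose[OF linear_right] by (simp add: o_def)
lemma linear_precomp_left: "linear f \<Longrightarrow> linear (\<lambda>x. h (f x) y)"
  using linear_compose[OF _ linear_left] by (simp add: o_def)
lemma linear_precomp_right: "linear f \<Longrightarrow> linear (\<lambda>y. h x (f y))"
  using linear_compose[OF _ linear_right] by (simp add: o_def)

end

locale sym_bilinear_form = bilinear_map g for g :: "'a::real_vector \<Rightarrow> 'a \<Rightarrow> real" +
  assumes sym: "g x y = g y x"
begin

lemma scale_left_real [simp]: "g (c *\<^sub>R x) z = c * g x z"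
  and scale_right_real [simp]: "g z (c *\<^sub>R x) = c * g z x"
  by simp_all

end

lemma linear_sum_scaleR:
  "linear f \<Longrightarrow> f (\<Sum>i\<in>A. c i *\<^sub>R v i) = (\<Sum>i\<in>A. c i *\<^sub>R f (v i))"
  by (simp add: linear_sum linear_scale)

lemma linear_inv:
  assumes "linear f" and "bij f"
  shows "linear (inv f)"
proof -
  have right: "f (inv f y) = y" for y using assms(2) by (simp add: bij_is_surj surj_f_inv_f)
  have left: "inv f (f x) = x" for x using assms(2) by (simp add: bij_is_inj)
  show ?thesis
    by (rule linearI; metis left right linear_add[OF assms(1)] linear_scale[OF assms(1)])
qed

lemma lin_trace_add: "lin_trace (\<lambda>w. f w + h w) = lin_trace f + lin_trace h"
  by (simp add: lin_trace_def inner_add_left sum.distrib)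

lemma lin_trace_scaleR: "lin_trace (\<lambda>w. c *\<^sub>R f w) = c * lin_trace f"
  by (simp add: lin_trace_def sum_distrib_left)

lemma lin_trace_frame:
  fixes f :: "'a::euclidean_space \<Rightarrow> 'a" and x :: "'j \<Rightarrow> 'a"
  assumes "finite J" and expand: "\<And>y. y = (\<Sum>j\<in>J. c j y *\<^sub>R x j)"
    and c: "\<And>j. linear (c j)" and f: "linear f"
  shows "lin_trace f = (\<Sum>j\<in>J. c j (f (x j)))"
proof -
  have "lin_trace f = (\<Sum>b\<in>Basis. \<Sum>j\<in>J. c j (f b) * inner (x j) b)"
    unfolding lin_trace_def by (subst expand) (simp add: inner_sum_left)
  also have "\<dots> = (\<Sum>j\<in>J. \<Sum>b\<in>Basis. inner (x j) b * c j (f b))"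
    by (subst sum.swap) (simp add: mult.commute)
  also have "\<dots> = (\<Sum>j\<in>J. c j (f (x j)))"
  proof (rule sum.cong[OF refl])
    fix j
    have "linear (\<lambda>y. c j (f y))" using linear_compose[OF f c] by (simp add: o_def)
    from linear_sum_scaleR[OF this, of "inner (x j)" "\<lambda>b. b" Basis]
    show "(\<Sum>b\<in>Basis. inner (x j) b * c j (f b)) = c j (f (x j))"
      by (simp add: euclidean_representation)
  qed
  finally show ?thesis .
qed

lemma lin_trace_conjugate:
  fixes \<phi> :: "'a::euclidean_space \<Rightarrow> 'b::euclidean_space"
  assumes \<phi>: "linear \<phi>" and \<psi>: "linear \<psi>" and inverse: "\<And>y. \<phi> (\<psi> y) = y" and F: "linear F"
  shows "lin_trace F = lin_trace (\<lambda>w. \<psi> (F (\<phi> w)))"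
proof -
  have "y = (\<Sum>b\<in>Basis. inner (\<psi> y) b *\<^sub>R \<phi> b)" for y
    using linear_sum_scaleR[OF \<phi>, of "\<lambda>b. inner (\<psi> y) b" id Basis]
    by (simp add: euclidean_representation inverse)
  moreover have "linear (\<lambda>y. inner (\<psi> y) b)" for b :: 'a
    using \<psi> by (simp add: linear_iff inner_add_left)
  ultimately have "lin_trace F = (\<Sum>b\<in>Basis. inner (\<psi> (F (\<phi> b))) b)"
    by (intro lin_trace_frame[OF finite_Basis _ _ F])
  then show ?thesis by (simp add: lin_trace_def)
qed

lemma lin_trace_comp_expand:
  fixes f h :: "'a::euclidean_space \<Rightarrow> 'a"
  assumes "linear f"
  shows "lin_trace (\<lambda>w. f (h w)) = (\<Sum>b\<in>Basis. \<Sum>c\<in>Basis. inner (h b) c * inner (f c) b)"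
proof -
  have "f (h b) = (\<Sum>c\<in>Basis. inner (h b) c *\<^sub>R f c)" for b
    using linear_sum_scaleR[OF assms, of "inner (h b)" id Basis]
    by (simp add: euclidean_representation)
  then show ?thesis unfolding lin_trace_def by (simp add: inner_sum_left)
qed

lemma lin_trace_comp_commute:
  fixes f h :: "'a::euclidean_space \<Rightarrow> 'a"
  assumes "linear f" and "linear h"
  shows "lin_trace (\<lambda>w. f (h w)) = lin_trace (\<lambda>w. h (f w))"
  unfolding lin_trace_comp_expand[OF assms(1)] lin_trace_comp_expand[OF assms(2)]
  by (subst sum.swap) (simp add: mult.commute)

definition killing_form :: "('a::euclidean_space \<Rightarrow> 'a \<Rightarrow> 'a) \<Rightarrow> 'a \<Rightarrow> 'a \<Rightarrow> real" where
  "killing_form br X Y = lin_trace (\<lambda>W. br X (br Y W))"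

lemma nonneg_quadratic_linear_coeff_zero:
  fixes a b :: real
  assumes "\<And>t. a * t + b * t * t \<ge> 0"
  shows "a = 0"
proof (rule ccontr)
  assume "a \<noteq> 0"
  define B where "B = \<bar>b\<bar> + 1"
  have "B > 0" by (simp add: B_def add_nonneg_pos)
  define t where "t = - a / (2 * B)"
  have "a * t + B * t * t = - (a * a) / (4 * B)" using \<open>B > 0\<close> by (simp add: t_def field_simps)
  also have "\<dots> < 0"
  proof -
    have "a * a > 0" using \<open>a \<noteq> 0\<close> by (metis not_real_square_gt_zero)
    with \<open>B > 0\<close> show ?thesis by simp
  qed
  finally have "a * t + B * t * t < 0" .
  moreover have "b * t * t \<le> B * t * t"
    using mult_right_mono[of b B "t * t"] by (simp add: B_def mult.assoc)
  ultimately show False using assms[of t] by linarith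
qed

lemma killing_form_sym:
  assumes "bilinear br"
  shows "killing_form br X Y = killing_form br Y X"
  using assms unfolding killing_form_def bilinear_def by (intro lin_trace_comp_commute) auto

lemma killing_form_zero_if_nonneg:
  assumes br: "bilinear br" and nonneg: "\<And>X. killing_form br X X \<ge> 0" and "killing_form br X X = 0"
  shows "killing_form br X Y = 0"
proof -
  interpret bilinear_map br by unfold_locales fact
  have "(\<lambda>W. br (X + t *\<^sub>R Y) (br (X + t *\<^sub>R Y) W)) = (\<lambda>W. br X (br X W)
      + (t *\<^sub>R br X (br Y W) + t *\<^sub>R br Y (br X W)) + (t * t) *\<^sub>R br Y (br Y W))" for t
    by (intro ext) (simp add: algebra_simps)
  then have "killing_form br (X + t *\<^sub>R Y) (X + t *\<^sub>R Y)
      = killing_form br X X + t * (2 * killing_form br X Y) + t * t * killing_form br Y Y" for t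
    using killing_form_sym[OF br, of Y X]
    by (simp add: killing_form_def lin_trace_add lin_trace_scaleR algebra_simps)
  then have "(2 * killing_form br X Y) * t + killing_form br Y Y * t * t \<ge> 0" for t
    using nonneg[of "X + t *\<^sub>R Y"] assms(3) by (simp add: algebra_simps)
  from nonneg_quadratic_linear_coeff_zero[OF this] show ?thesis by simp
qed

section \<open>Complete flags\<close>

definition complete_flag :: "(nat \<Rightarrow> 'a::euclidean_space set) \<Rightarrow> bool" where
  "complete_flag F \<longleftrightarrow> (\<forall>i\<le>DIM('a). subspace (F i) \<and> dim (F i) = i)
     \<and> (\<forall>i<DIM('a). F i \<subseteq> F (Suc i))"

lemma completely_solvable_flag:
  fixes br :: "'a::euclidean_space \<Rightarrow> 'a \<Rightarrow> 'a"
  assumes "completely_solvable br"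
  obtains F where "complete_flag F" and "\<And>i x y. i \<le> DIM('a) \<Longrightarrow> y \<in> F i \<Longrightarrow> br x y \<in> F i"
  using assms unfolding completely_solvable_def complete_flag_def lie_ideal_def by metis

lemma complete_flag_mono:
  assumes "complete_flag F" and "i \<le> j" and "j \<le> DIM('a::euclidean_space)"
  shows "F i \<subseteq> (F j :: 'a set)"
  using assms lift_Suc_mono_le_ivl[of "{..<DIM('a)}" F i j]
  unfolding complete_flag_def by force

lemma complete_flag_unit_normal:
  fixes F :: "nat \<Rightarrow> 'a::euclidean_space set"
  assumes F: "complete_flag F" and i: "1 \<le> i" "i \<le> DIM('a)"
  shows "\<exists>q. q \<in> F i \<and> norm q = 1 \<and> (\<forall>y\<in>F (i - 1). inner q y = 0)"
proof -
  have sub: "subspace (F (i - 1))" "subspace (F i)" and dim: "dim (F (i - 1)) \<noteq> dim (F i)"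
    using F i unfolding complete_flag_def by auto
  have "F (i - 1) \<subset> F i"
    using complete_flag_mono[OF F, of "i - 1" i] i dim by auto
  then have "span (F (i - 1)) \<subset> span (F i)"
    using sub by (simp add: span_eq_iff[THEN iffD2])
  then obtain x where x: "x \<noteq> 0" "x \<in> span (F i)" "\<And>y. y \<in> span (F (i - 1)) \<Longrightarrow> orthogonal x y"
    using orthogonal_to_subspace_exists_gen by metis
  have "x /\<^sub>R norm x \<in> F i"
    using x(2) sub by (simp add: span_eq_iff[THEN iffD2] subspace_scale)
  with x show ?thesis
    by (intro exI[of _ "x /\<^sub>R norm x"]) (auto simp: orthogonal_def span_base)
qed

lemma complete_flag_orthonormal_basis:
  fixes F :: "nat \<Rightarrow> 'a::euclidean_space set"
  assumes F: "complete_flag F"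
  obtains q where "\<And>i. i \<in> {1..DIM('a)} \<Longrightarrow> q i \<in> F i \<and> norm (q i) = 1 \<and> (\<forall>y\<in>F (i - 1). inner (q i) y = 0)"
    and "\<And>y. y = (\<Sum>i\<in>{1..DIM('a)}. inner y (q i) *\<^sub>R q i)"
proof -
  let ?n = "DIM('a)"
  obtain q where q: "\<And>i. i \<in> {1..?n} \<Longrightarrow> q i \<in> F i \<and> norm (q i) = 1 \<and> (\<forall>y\<in>F (i - 1). inner (q i) y = 0)"
    using complete_flag_unit_normal[OF F] by (metis atLeastAtMost_iff)
  have orth_less: "inner (q i) (q j) = 0" if "j < i" "i \<in> {1..?n}" "j \<in> {1..?n}" for i j
  proof -
    have "q j \<in> F (i - 1)"
      using q[OF that(3)] complete_flag_mono[OF F, of j "i - 1"] that by force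
    then show ?thesis using q[OF that(2)] by blast
  qed
  have orth: "inner (q i) (q j) = 0" if "i \<in> {1..?n}" "j \<in> {1..?n}" "i \<noteq> j" for i j
    using orth_less[of i j] orth_less[of j i] that by (metis inner_commute linorder_neqE_nat)
  have inj: "inj_on q {1..?n}"
    using orth q by (metis inj_onI inner_eq_zero_iff norm_zero zero_neq_one)
  let ?Q = "q ` {1..?n}"
  have po: "pairwise orthogonal ?Q"
    using orth unfolding pairwise_def orthogonal_def by blast
  have "independent ?Q"
    using q by (intro pairwise_orthogonal_independent[OF po]) fastforce
  moreover have "card ?Q = dim (UNIV :: 'a set)"
    using inj by (simp add: card_image)
  ultimately have "y \<in> span ?Q" for y
    using card_eq_dim[of ?Q UNIV] by auto
  then have "(\<Sum>v\<in>?Q. inner y v *\<^sub>R v) = y" for y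
    using q by (intro orthonormal_basis_expand[OF po]) auto
  moreover have "(\<Sum>v\<in>?Q. inner y v *\<^sub>R v) = (\<Sum>i\<in>{1..?n}. inner y (q i) *\<^sub>R q i)" for y
    using sum.reindex[OF inj, of "\<lambda>v. inner y v *\<^sub>R v"] by (simp add: o_def)
  ultimately have "y = (\<Sum>i\<in>{1..?n}. inner y (q i) *\<^sub>R q i)" for y
    by metis
  with q that show ?thesis by blast
qed

lemma invariant_flag_step_square_nonneg:
  fixes A :: "'a::euclidean_space \<Rightarrow> 'a"
  assumes "subspace P" and "subspace T" and "P \<subseteq> T" and "dim T = dim P + 1"
    and q: "q \<in> T" "norm q = 1" "\<And>y. y \<in> P \<Longrightarrow> inner q y = 0"
    and A: "linear A" "\<And>y. y \<in> T \<Longrightarrow> A y \<in> T" "\<And>y. y \<in> P \<Longrightarrow> A y \<in> P"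
  shows "inner (A (A q)) q \<ge> 0"
proof -
  have qq: "inner q q = 1" using q(2) by (simp add: norm_eq_1)
  have "q \<notin> span P" using q(3)[of q] qq assms(1) by (auto simp: span_eq_iff[THEN iffD2])
  then have "dim (insert q P) = dim T" using assms(4) by (simp add: dim_insert)
  moreover have "span (insert q P) \<subseteq> T" using q(1) assms(2,3) by (intro span_minimal) auto
  ultimately have "span (insert q P) = T" using assms(2) by (intro subspace_dim_equal) auto
  then obtain k where "A q - k *\<^sub>R q \<in> span P" using A(2)[OF q(1)] by (auto simp: span_insert)
  then obtain r where r: "r \<in> P" and Aq: "A q = k *\<^sub>R q + r"
    using assms(1) by (metis add_diff_cancel_left' diff_add_cancel span_eq_iff)
  \<comment> \<open>modulo P, A acts on q as multiplication by k, so A \<circ> A contributes k * k\<close>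
  have "inner (A (A q)) q = k * inner (A q) q + inner (A r) q"
    using A(1) by (simp add: Aq linear_add linear_scale inner_add_left)
  also have "inner (A r) q = 0" using q(3)[OF A(3)[OF r]] by (simp add: inner_commute)
  also have "inner (A q) q = k" using q(3)[OF r] qq by (simp add: Aq inner_add_left inner_commute[of r])
  finally show ?thesis by simp
qed

lemma lin_trace_square_nonneg_invariant_flag:
  fixes A :: "'a::euclidean_space \<Rightarrow> 'a"
  assumes F: "complete_flag F" and A: "linear A" and inv: "\<And>i y. i \<le> DIM('a) \<Longrightarrow> y \<in> F i \<Longrightarrow> A y \<in> F i"
  shows "lin_trace (\<lambda>w. A (A w)) \<ge> 0"
proof -
  obtain q where q: "\<And>i. i \<in> {1..DIM('a)} \<Longrightarrow> q i \<in> F i \<and> norm (q i) = 1 \<and> (\<forall>y\<in>F (i - 1). inner (q i) y = 0)"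
    and expand: "\<And>y. y = (\<Sum>i\<in>{1..DIM('a)}. inner y (q i) *\<^sub>R q i)"
    using complete_flag_orthonormal_basis[OF F] by blast
  have "lin_trace (\<lambda>w. A (A w)) = (\<Sum>i\<in>{1..DIM('a)}. inner (A (A (q i))) (q i))"
    using A by (intro lin_trace_frame[OF finite_atLeastAtMost expand])
      (simp_all add: linear_iff inner_add_left linear_compose[unfolded o_def])
  also have "\<dots> \<ge> 0"
  proof (intro sum_nonneg invariant_flag_step_square_nonneg[OF _ _ _ _ _ _ _ A])
    fix i assume i: "i \<in> {1..DIM('a)}"
    then show "subspace (F (i - 1))" "subspace (F i)" "dim (F i) = dim (F (i - 1)) + 1"
      using F unfolding complete_flag_def by auto
    show "F (i - 1) \<subseteq> F i" using complete_flag_mono[OF F] i by simp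
  qed (use q inv in auto)
  finally show ?thesis .
qed

lemma completely_solvable_killing_form_nonneg:
  fixes br :: "'a::euclidean_space \<Rightarrow> 'a \<Rightarrow> 'a"
  assumes "bilinear br" and "completely_solvable br"
  shows "killing_form br x x \<ge> 0"
proof -
  obtain F where "complete_flag F" and "\<And>i x y. i \<le> DIM('a) \<Longrightarrow> y \<in> F i \<Longrightarrow> br x y \<in> F i"
    using completely_solvable_flag[OF assms(2)] by blast
  with assms(1) show ?thesis
    unfolding killing_form_def
    by (intro lin_trace_square_nonneg_invariant_flag) (auto simp: bilinear_def)
qed

section \<open>The Koszul formula and the Ricci form\<close>

text \<open>The metric is \<open>x \<bullet> S y\<close> for a self-adjoint involution \<open>S\<close> permuting the standard basis, so
  that \<open>S ` Basis\<close> is the dual basis of \<open>Basis\<close>. This covers the double-extension form on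
  \<open>real \<times> 'w \<times> real\<close>, where \<open>S\<close> swaps the two real coordinates.\<close>

locale involution_metric_algebra = bracket: bilinear_map br
  for br :: "'u::euclidean_space \<Rightarrow> 'u \<Rightarrow> 'u" +
  fixes S :: "'u \<Rightarrow> 'u"
  assumes antisym: "br x y = - br y x"
    and S_linear: "linear S" and S_S [simp]: "S (S x) = x"
    and S_self_adjoint: "inner (S x) y = inner x (S y)"
    and S_Basis: "b \<in> Basis \<Longrightarrow> S b \<in> Basis"
begin

definition metric :: "'u \<Rightarrow> 'u \<Rightarrow> real" where "metric x y = inner x (S y)"

sublocale metric: sym_bilinear_form metric
proof
  show "bilinear metric"
    using S_linear unfolding bilinear_def metric_def
    by (auto simp: linear_iff inner_add_left inner_add_right)
  show "metric x y = metric y x" for x y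
    unfolding metric_def by (metis S_self_adjoint inner_commute)
qed

lemma br_self [simp]: "br x x = 0"
proof -
  have "2 *\<^sub>R br x x = 0" using antisym[of x x] by (simp add: scaleR_2 eq_neg_iff_add_eq_0)
  then show ?thesis by simp
qed

lemma metric_S: "metric x (S y) = inner x y"
  by (simp add: metric_def)

lemma metric_nondegenerate: "(\<And>w. metric z w = 0) \<Longrightarrow> z = 0"
  by (metis inner_eq_zero_iff metric_S)

lemma sum_Basis_S: "(\<Sum>k\<in>Basis. h k) = (\<Sum>k\<in>Basis. h (S k))"
  by (rule sum.reindex_bij_witness[where i=S and j=S]) (auto simp: S_Basis)

lemma double_sum_Basis_S_swap:
  "(\<Sum>m\<in>Basis. \<Sum>k\<in>Basis. f m k) = (\<Sum>m\<in>Basis. \<Sum>k\<in>Basis. f (S k) (S m))"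
  by (subst sum_Basis_S, subst (2) sum_Basis_S, rule sum.swap)

lemma lin_trace_metric: "lin_trace f = (\<Sum>m\<in>Basis. metric (f m) (S m))"
  by (simp add: lin_trace_def metric_S)

lemma expand_S: "x = (\<Sum>k\<in>Basis. metric x (S k) *\<^sub>R k)"
  by (simp add: metric_S euclidean_representation)

definition koszul :: "'u \<Rightarrow> 'u \<Rightarrow> 'u \<Rightarrow> real" where
  "koszul u v w = metric (br u v) w + metric (br w u) v + metric (br w v) u"

definition koszul_dual :: "'u \<Rightarrow> 'u \<Rightarrow> 'u" where
  "koszul_dual u v = (\<Sum>k\<in>Basis. (koszul u v (S k) / 2) *\<^sub>R k)"

lemma koszul_linear_1: "linear (\<lambda>u. koszul u v w)"
  and koszul_linear_2: "linear (\<lambda>v. koszul u v w)"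
  and koszul_linear_3: "linear (\<lambda>w. koszul u v w)"
  by (rule linearI; simp add: koszul_def algebra_simps)+

lemma metric_koszul_dual: "metric (koszul_dual u v) w = koszul u v w / 2"
proof -
  have "metric (koszul_dual u v) w = (\<Sum>k\<in>Basis. inner (S w) k * koszul u v (S k)) / 2"
    unfolding koszul_dual_def metric.sum_left
    by (simp add: metric_def sum_divide_distrib inner_commute mult.commute)
  also have "(\<Sum>k\<in>Basis. inner (S w) k * koszul u v (S k)) = koszul u v (S (S w))"
    by (subst (2) euclidean_representation[symmetric])
      (simp add: linear_sum_scaleR[OF linear_compose[OF S_linear koszul_linear_3, unfolded o_def]])
  finally show ?thesis by simp
qed

lemma levi_civita_eq_koszul_dual: "levi_civita br metric = koszul_dual"
proof (intro ext)
  fix u v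
  show "levi_civita br metric u v = koszul_dual u v"
    unfolding levi_civita_def
  proof (rule the_equality)
    fix z assume z: "\<forall>w. 2 * metric z w = metric (br u v) w + metric (br w u) v + metric (br w v) u"
    have "metric z w = koszul u v w / 2" for w using z[rule_format, of w] by (simp add: koszul_def)
    then have "metric (z - koszul_dual u v) w = 0" for w by (simp add: metric_koszul_dual)
    then show "z = koszul_dual u v" using metric_nondegenerate[of "z - koszul_dual u v"] by simp
  qed (simp add: metric_koszul_dual koszul_def)
qed

lemma levi_civita_koszul:
  "2 * metric (levi_civita br metric u v) w = metric (br u v) w + metric (br w u) v + metric (br w v) u"
  by (simp add: levi_civita_eq_koszul_dual metric_koszul_dual koszul_def)

lemma levi_civita_bilinear: "bilinear (levi_civita br metric)"
  unfolding levi_civita_eq_koszul_dual bilinear_def koszul_dual_def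
  by (auto intro!: linearI simp: linear_add[OF koszul_linear_1] linear_scale[OF koszul_linear_1]
      linear_add[OF koszul_linear_2] linear_scale[OF koszul_linear_2]
      sum.distrib add_divide_distrib scaleR_add_left scaleR_sum_right)

lemma koszul_swap: "koszul u v w = - koszul u w v"
  unfolding koszul_def by (simp add: antisym[of u w] antisym[of v u] antisym[of v w])

definition ad_pairing :: "'u \<Rightarrow> 'u \<Rightarrow> real" where
  "ad_pairing u v = (\<Sum>m\<in>Basis. metric (br u m) (br v (S m)))"

definition structure_pairing :: "'u \<Rightarrow> 'u \<Rightarrow> real" where
  "structure_pairing u v = (\<Sum>i\<in>Basis. \<Sum>j\<in>Basis. metric (br i j) u * metric (br (S i) (S j)) v)"

definition cross_term :: "'u \<Rightarrow> 'u \<Rightarrow> real" where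
  "cross_term u v = (\<Sum>m\<in>Basis. metric (br (S m) (br u m)) v)"

lemma koszul_product_sum:
  "(\<Sum>m\<in>Basis. \<Sum>k\<in>Basis. koszul m v (S k) * koszul u k (S m))
     = (\<Sum>m\<in>Basis. \<Sum>k\<in>Basis. metric (br (S k) m) v * koszul u k (S m))"
proof -
  let ?A = "\<lambda>m k. metric (br m v) (S k) + metric (br (S k) v) m"
  \<comment> \<open>the substitution (m, k) \<mapsto> (S k, S m) swaps the two summands of ?A and flips the sign of the
      second factor, so the ?A-part of the first factor contributes nothing\<close>
  have "(\<Sum>m\<in>Basis. \<Sum>k\<in>Basis. ?A m k * koszul u k (S m))
      = (\<Sum>m\<in>Basis. \<Sum>k\<in>Basis. ?A (S k) (S m) * koszul u (S m) k)"
    by (subst double_sum_Basis_S_swap) simp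
  also have "\<dots> = - (\<Sum>m\<in>Basis. \<Sum>k\<in>Basis. ?A m k * koszul u k (S m))"
    by (simp add: koszul_swap[of u "S m" for m] sum_negf[symmetric] add.commute)
  finally have "(\<Sum>m\<in>Basis. \<Sum>k\<in>Basis. ?A m k * koszul u k (S m)) = 0" by simp
  then show ?thesis
    by (simp add: koszul_def[of _ v] distrib_right sum.distrib algebra_simps)
qed

lemma koszul_square_sum:
  "(\<Sum>m\<in>Basis. \<Sum>k\<in>Basis. koszul m v (S k) * koszul u k (S m)) = 2 * cross_term u v - structure_pairing u v"
proof -
  let ?s = "\<lambda>f. (\<Sum>m\<in>Basis. \<Sum>k\<in>Basis. (f m k :: real))"
  let ?A = "\<lambda>m k. metric (br (S k) m) v"
  have cross: "?s (\<lambda>m k. ?A m k * metric (br u k) (S m)) = cross_term u v"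
  proof -
    have "br (S m) (br u m) = (\<Sum>k\<in>Basis. metric (br u m) (S k) *\<^sub>R br (S m) k)" for m
      using bracket.sum_right[of "S m" "\<lambda>k. metric (br u m) (S k) *\<^sub>R k" Basis]
      by (simp flip: expand_S)
    then have "cross_term u v = ?s (\<lambda>m k. metric (br u m) (S k) * metric (br (S m) k) v)"
      unfolding cross_term_def by (simp add: metric.sum_left)
    then show ?thesis by (subst sum.swap) (simp add: mult.commute)
  qed
  have second: "?s (\<lambda>m k. ?A m k * metric (br (S m) u) k) = ?s (\<lambda>m k. ?A m k * metric (br u k) (S m))"
    by (subst double_sum_Basis_S_swap) (simp add: antisym[of _ u] antisym[of m "S k" for m k])
  have third: "?s (\<lambda>m k. ?A m k * metric (br (S m) k) u) = - structure_pairing u v"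
  proof -
    have "structure_pairing u v = ?s (\<lambda>m k. metric (br (S m) k) u * metric (br m (S k)) v)"
      unfolding structure_pairing_def by (subst sum_Basis_S) simp
    then show ?thesis
      by (simp add: antisym[of m "S k" for m k] sum_negf[symmetric] mult.commute)
  qed
  show ?thesis
    unfolding koszul_product_sum
    by (simp add: koszul_def[of u] distrib_left sum.distrib cross second third)
qed

end

locale unimodular_involution_metric_algebra = involution_metric_algebra +
  assumes unimodular: "lin_trace (br u) = 0"
begin

lemma koszul_trace: "(\<Sum>m\<in>Basis. koszul m z (S m)) = 0"
proof -
  have first: "(\<Sum>m\<in>Basis. metric (br m z) (S m)) = 0"
    using unimodular[of z] by (simp add: lin_trace_def metric_S antisym[of _ z] sum_negf)
  have "(\<Sum>m\<in>Basis. metric (br (S m) m) z) = (\<Sum>m\<in>Basis. metric (br m (S m)) z)"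
    by (subst sum_Basis_S) simp
  then have second: "(\<Sum>m\<in>Basis. metric (br (S m) m) z) = 0"
    by (simp add: antisym[of _ "S m" for m] sum_negf)
  have "(\<Sum>m\<in>Basis. metric (br (S m) z) m) = (\<Sum>m\<in>Basis. metric (br m z) (S m))"
    by (subst sum_Basis_S) simp
  with first second show ?thesis
    by (simp add: koszul_def sum.distrib)
qed

lemma ricci_form_koszul:
  "ricci_form br metric u v = (\<Sum>m\<in>Basis. koszul (br u m) v (S m)) / 2
     - (\<Sum>m\<in>Basis. \<Sum>k\<in>Basis. koszul m v (S k) * koszul u k (S m)) / 4"
proof -
  have "koszul u (koszul_dual m v) w = (\<Sum>k\<in>Basis. koszul m v (S k) / 2 * koszul u k w)" for m w
    unfolding koszul_dual_def by (simp only: linear_sum_scaleR[OF koszul_linear_2[of u w]]) simp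
  then have "ricci_form br metric u v = (\<Sum>m\<in>Basis. koszul (br u m) v (S m)) / 2
      - (\<Sum>m\<in>Basis. \<Sum>k\<in>Basis. koszul m v (S k) * koszul u k (S m)) / 4
      + (\<Sum>m\<in>Basis. koszul m (koszul_dual u v) (S m)) / 2"
    unfolding ricci_form_def curvature_def levi_civita_eq_koszul_dual Let_def lin_trace_metric
    by (simp add: metric_koszul_dual sum_subtractf sum.distrib sum_divide_distrib sum_distrib_left algebra_simps)
  then show ?thesis by (simp add: koszul_trace)
qed

theorem ricci_form_formula:
  "ricci_form br metric u v
     = - killing_form br v u / 2 - ad_pairing u v / 2 + structure_pairing u v / 4"
proof -
  have "(\<Sum>m\<in>Basis. metric (br (br u m) v) (S m)) = - lin_trace (\<lambda>w. br v (br u w))"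
    by (simp add: lin_trace_metric antisym[of _ v] sum_negf)
  moreover have "(\<Sum>m\<in>Basis. metric (br (S m) v) (br u m)) = - ad_pairing u v"
    unfolding ad_pairing_def by (simp add: metric.sym[of _ "br u _"] antisym[of "S m" v for m] sum_negf)
  ultimately have "(\<Sum>m\<in>Basis. koszul (br u m) v (S m))
      = - lin_trace (\<lambda>w. br v (br u w)) + cross_term u v - ad_pairing u v"
    unfolding koszul_def sum.distrib cross_term_def by simp
  then show ?thesis
    unfolding ricci_form_koszul koszul_square_sum killing_form_def by (simp add: field_simps)
qed

end

section \<open>Witt frames of Lorentzian forms\<close>

definition dext_swap :: "real \<times> 'w::euclidean_space \<times> real \<Rightarrow> real \<times> 'w \<times> real" where
  "dext_swap X = (snd (snd X), fst (snd X), fst X)"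

lemma dext_form_swap: "dext_form X (dext_swap Y) = inner X Y"
  by (cases X; cases Y) (simp add: dext_form_def dext_swap_def inner_prod_def)

lemma dext_swap_swap [simp]: "dext_swap (dext_swap X) = X"
  by (simp add: dext_swap_def)

lemma dext_form_eq_inner_swap: "dext_form X Y = inner X (dext_swap Y)"
  using dext_form_swap[of X "dext_swap Y"] by simp

lemma dext_form_nondegenerate: "(\<And>Y. dext_form X Y = 0) \<Longrightarrow> X = 0"
  by (metis dext_form_swap inner_eq_zero_iff)

lemma positive_form_orthonormal_set:
  fixes g :: "'a::euclidean_space \<Rightarrow> 'a \<Rightarrow> real"
  assumes "sym_bilinear_form g" and "subspace V" and "\<And>x. x \<in> V \<Longrightarrow> x \<noteq> 0 \<Longrightarrow> g x x > 0"
  obtains B where "B \<subseteq> V" "finite B" "card B = dim V" "\<And>x. x \<in> B \<Longrightarrow> g x x = 1"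
    "\<And>x y. x \<in> B \<Longrightarrow> y \<in> B \<Longrightarrow> x \<noteq> y \<Longrightarrow> g x y = 0"
proof -
  interpret sym_bilinear_form g by fact
  have "\<exists>B. B \<subseteq> V \<and> finite B \<and> card B = dim V \<and> (\<forall>x\<in>B. g x x = 1)
      \<and> (\<forall>x\<in>B. \<forall>y\<in>B. x \<noteq> y \<longrightarrow> g x y = 0)"
    using assms(2,3)
  proof (induction "dim V" arbitrary: V)
    case 0
    then show ?case by (intro exI[of _ "{}"]) auto
  next
    case (Suc n V)
    obtain v where v: "v \<in> V" "v \<noteq> 0"
      using Suc.hyps(2) by (metis dim_eq_0 nat.distinct(1) subset_singletonD insert_subset empty_subsetI subsetI)
    define w where "w = v /\<^sub>R sqrt (g v v)"
    have "g v v > 0" using Suc.prems(2) v by blast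
    then have "sqrt (g v v) * sqrt (g v v) = g v v" by simp
    then have w: "w \<in> V" "g w w = 1"
      using Suc.prems(1) v \<open>g v v > 0\<close> by (simp_all add: w_def subspace_scale field_simps)
    define V' where "V' = {x\<in>V. g x w = 0}"
    have V': "subspace V'" "V' \<subseteq> V" "w \<notin> span V'"
      using Suc.prems(1) w unfolding V'_def subspace_def
      by (auto simp: span_eq_iff[THEN iffD2, of "{x\<in>V. g x w = 0}"] subspace_def)
    have "x - g x w *\<^sub>R w \<in> V'" if "x \<in> V" for x
      using that Suc.prems(1) w unfolding V'_def by (auto simp: subspace_diff subspace_scale)
    then have "V \<subseteq> span (insert w V')" by (force simp: span_insert intro: span_base)
    then have "dim V \<le> dim (insert w V')" by (rule dim_mono)
    moreover have "dim (insert w V') \<le> dim V" using w V' by (intro dim_subset) auto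
    ultimately have "n = dim V'" using Suc.hyps(2) V'(3) by (simp add: dim_insert)
    then obtain B' where B': "B' \<subseteq> V'" "finite B'" "card B' = dim V'" "\<forall>x\<in>B'. g x x = 1"
      "\<forall>x\<in>B'. \<forall>y\<in>B'. x \<noteq> y \<longrightarrow> g x y = 0"
      using Suc.hyps(1) V' Suc.prems(2) by blast
    have "w \<notin> B'" using B'(1) V'(3) span_base by blast
    moreover have "g x w = 0" if "x \<in> B'" for x using that B'(1) by (auto simp: V'_def)
    ultimately show ?case
      using B' w V'(2) Suc.hyps(2) \<open>n = dim V'\<close> sym
      by (intro exI[of _ "insert w B'"]) auto
  qed
  with that show ?thesis by blast
qed

lemma lorentzian_form_sym_bilinear: "lorentzian_form g \<Longrightarrow> sym_bilinear_form g"
  unfolding lorentzian_form_def by unfold_locales auto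

lemma lorentzian_null_partner:
  assumes "lorentzian_form g" and "e \<noteq> 0" and "g e e = 0"
  obtains f where "g e f = 1" and "g f f = 0"
proof -
  interpret sym_bilinear_form g using assms(1) by (rule lorentzian_form_sym_bilinear)
  obtain z where z: "g e z \<noteq> 0"
    using assms(1,2) unfolding lorentzian_form_def nondegenerate_form_def by blast
  define z' where "z' = z /\<^sub>R g e z"
  have "g e z' = 1" using z by (simp add: z'_def)
  with assms(3) show ?thesis
    by (intro that[of "z' - (g z' z' / 2) *\<^sub>R e"]) (simp_all add: sym[of z' e] algebra_simps)
qed

lemma lorentzian_hyperbolic_complement_pos:
  assumes g: "lorentzian_form g" and ef: "g e e = 0" "g f f = 0" "g e f = 1"
    and x: "g x e = 0" "g x f = 0" "x \<noteq> 0"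
  shows "g x x > 0"
proof (rule ccontr)
  interpret sym_bilinear_form g using g by (rule lorentzian_form_sym_bilinear)
  assume nonpos: "\<not> g x x > 0"
  obtain t where t: "g t t < 0" "\<And>y. g y t = 0 \<Longrightarrow> y \<noteq> 0 \<Longrightarrow> g y y > 0"
    using g unfolding lorentzian_form_def by blast
  \<comment> \<open>g is negative semidefinite on the plane spanned by x and e - f, and positive definite on
      the hyperplane g-orthogonal to t; but these two meet outside 0\<close>
  define p where "p = e - f"
  have p: "g p p = -2" "g x p = 0" "g p e = -1"
    using ef x by (simp_all add: p_def sym[of f e])
  show False
  proof (cases "g p t = 0")
    case True
    then show False using t(2)[of p] p(1) by fastforce
  next
    case False
    define w where "w = g p t *\<^sub>R x - g x t *\<^sub>R p"
    have "g w t = 0" by (simp add: w_def)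
    moreover have "w \<noteq> 0"
    proof
      assume "w = 0"
      then have "g w e = 0" by simp
      then have "g x t = 0" using x p by (simp add: w_def)
      then show False using \<open>w = 0\<close> False x(3) by (simp add: w_def)
    qed
    ultimately have "g w w > 0" using t(2) by blast
    moreover have "g w w = (g p t * g p t) * g x x - 2 * (g x t * g x t)"
      using p sym[of p x] by (simp add: w_def algebra_simps)
    moreover have "(g p t * g p t) * g x x \<le> 0"
      using nonpos by (simp add: mult_nonneg_nonpos)
    ultimately show False by (smt (verit) zero_le_square)
  qed
qed

lemma positive_subspace_isometric_embedding:
  fixes g :: "'v::euclidean_space \<Rightarrow> 'v \<Rightarrow> real"
  assumes "sym_bilinear_form g" and V: "subspace V" and pos: "\<And>x. x \<in> V \<Longrightarrow> x \<noteq> 0 \<Longrightarrow> g x x > 0"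
    and dim: "DIM('w) \<le> dim V"
  obtains \<psi> :: "'w::euclidean_space \<Rightarrow> 'v"
  where "linear \<psi>" "\<And>u. \<psi> u \<in> V" "\<And>u v. g (\<psi> u) (\<psi> v) = inner u v"
proof -
  interpret sym_bilinear_form g by fact
  obtain B where B: "B \<subseteq> V" "finite B" "card B = dim V" "\<And>x. x \<in> B \<Longrightarrow> g x x = 1"
    "\<And>x y. x \<in> B \<Longrightarrow> y \<in> B \<Longrightarrow> x \<noteq> y \<Longrightarrow> g x y = 0"
    using positive_form_orthonormal_set[OF assms(1) V pos] by blast
  obtain fb where fb: "fb ` (Basis :: 'w set) \<subseteq> B" "inj_on fb Basis"
    using card_le_inj[OF finite_Basis B(2)] dim B(3) by auto
  have fb_orth: "g (fb b) (fb b') = inner b b'" if "b \<in> Basis" "b' \<in> Basis" for b b'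
    using that fb B(4) B(5)[of "fb b" "fb b'"] by (auto simp: inner_Basis inj_on_eq_iff image_subset_iff)
  define \<psi> where "\<psi> u = (\<Sum>b\<in>Basis. inner u b *\<^sub>R fb b)" for u :: 'w
  have "linear \<psi>"
    unfolding \<psi>_def by (rule linearI) (simp_all add: inner_add_left scaleR_add_left sum.distrib scaleR_sum_right)
  moreover have "\<psi> u \<in> V" for u
    using fb(1) B(1) unfolding \<psi>_def by (intro subspace_sum[OF V] subspace_scale[OF V]) auto
  moreover have "g (\<psi> u) (\<psi> v) = inner u v" for u v
  proof -
    have "g (\<psi> u) (fb b') = inner u b'" if "b' \<in> Basis" for b'
    proof -
      have "g (\<psi> u) (fb b') = (\<Sum>b\<in>Basis. inner u b * inner b' b)"
        unfolding \<psi>_def sum_left using that by (intro sum.cong refl) (simp add: fb_orth inner_commute)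
      then show ?thesis by (simp add: euclidean_inner[of u b'])
    qed
    then have "g (\<psi> u) (\<psi> v) = (\<Sum>b\<in>Basis. inner u b * inner v b)"
      unfolding \<psi>_def[of v] sum_right by (intro sum.cong refl) simp
    then show ?thesis by (simp add: euclidean_inner[of u v])
  qed
  ultimately show ?thesis using that by blast
qed

lemma witt_frame_exists:
  fixes g :: "'v::euclidean_space \<Rightarrow> 'v \<Rightarrow> real"
  assumes g: "lorentzian_form g" and dim: "DIM('v) = DIM('w) + 2"
    and e: "e \<noteq> 0" "g e e = 0"
  obtains \<psi> :: "real \<times> 'w::euclidean_space \<times> real \<Rightarrow> 'v"
  where "linear \<psi>" "bij \<psi>" "\<And>X Y. g (\<psi> X) (\<psi> Y) = dext_form X Y" "\<psi> (1, 0, 0) = e"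
proof -
  interpret sym_bilinear_form g using g by (rule lorentzian_form_sym_bilinear)
  obtain f where f: "g e f = 1" "g f f = 0" using lorentzian_null_partner[OF g e] .
  define V where "V = {x. g x e = 0 \<and> g x f = 0}"
  have V: "subspace V" unfolding subspace_def V_def by auto
  have "x - g x f *\<^sub>R e - g x e *\<^sub>R f \<in> V" for x
    using e f by (simp add: V_def sym[of f e])
  then have "x \<in> span (insert e (insert f V))" for x
    unfolding span_insert by (blast intro: span_base)
  then have "DIM('v) \<le> dim (insert e (insert f V))"
    using dim_mono[of UNIV "insert e (insert f V)"] by auto
  also have "\<dots> \<le> dim V + 2" by (simp add: dim_insert)
  finally have "DIM('w) \<le> dim V" using dim by simp
  then obtain \<psi>0 :: "'w \<Rightarrow> 'v" where \<psi>0: "linear \<psi>0" "\<And>u. \<psi>0 u \<in> V" "\<And>u v. g (\<psi>0 u) (\<psi>0 v) = inner u v"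
    using positive_subspace_isometric_embedding[OF sym_bilinear_form_axioms V] 
      lorentzian_hyperbolic_complement_pos[OF g e(2) f(2) f(1)] unfolding V_def by blast
  have \<psi>0_ef: "g (\<psi>0 u) e = 0" "g (\<psi>0 u) f = 0" "g e (\<psi>0 u) = 0" "g f (\<psi>0 u) = 0" for u
    using \<psi>0(2)[of u] sym by (auto simp: V_def)
  define \<psi> where "\<psi> X = fst X *\<^sub>R e + \<psi>0 (fst (snd X)) + snd (snd X) *\<^sub>R f" for X :: "real \<times> 'w \<times> real"
  have lin: "linear \<psi>"
    unfolding \<psi>_def by (rule linearI) (simp_all add: algebra_simps linear_add[OF \<psi>0(1)] linear_scale[OF \<psi>0(1)])
  have iso: "g (\<psi> X) (\<psi> Y) = dext_form X Y" for X Y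
  proof -
    obtain a u c a' u' c' where "X = (a, u, c)" "Y = (a', u', c')" by (metis prod.exhaust)
    moreover have "g f e = 1" using f(1) sym by metis
    ultimately show ?thesis
      unfolding \<psi>_def dext_form_def
      by (simp only: add_left add_right scale_left_real scale_right_real e f \<psi>0_ef \<psi>0(3)
          fst_conv snd_conv prod.case) simp
  qed
  have "X = 0" if "\<psi> X = 0" for X
    using dext_form_nondegenerate[of X] iso[of X] that by simp
  then have "inj \<psi>" using lin by (simp add: linear_injective_0)
  moreover have "surj \<psi>"
    using \<open>inj \<psi>\<close> lin dim by (intro linear_injective_imp_surjective) simp_all
  moreover have "\<psi> (1, 0, 0) = e" by (simp add: \<psi>_def linear_0[OF \<psi>0(1)])
  ultimately show ?thesis using that lin iso by (simp add: bij_def)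
qed

section \<open>Transport along isometric isomorphisms\<close>

lemma involution_metric_algebra_dext:
  fixes br :: "real \<times> 'w::euclidean_space \<times> real \<Rightarrow> real \<times> 'w \<times> real \<Rightarrow> real \<times> 'w \<times> real"
  assumes "bilinear br" and "\<And>x y. br x y = - br y x"
  shows "involution_metric_algebra br dext_swap"
proof -
  have "linear (dext_swap :: real \<times> 'w \<times> real \<Rightarrow> _)"
    by (rule linearI) (simp_all add: dext_swap_def)
  moreover have "inner (dext_swap x) y = inner x (dext_swap y)" for x y :: "real \<times> 'w \<times> real"
    by (simp add: dext_swap_def inner_prod_def ac_simps)
  moreover have "dext_swap b \<in> Basis" if "b \<in> (Basis :: (real \<times> 'w \<times> real) set)" for b
    using that by (auto simp: Basis_prod_def dext_swap_def zero_prod_def)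
  ultimately show ?thesis
    using assms dext_swap_swap
    unfolding involution_metric_algebra_def involution_metric_algebra_axioms_def bilinear_map_def
    by blast
qed

lemma involution_metric_algebra_dext_metric:
  fixes br :: "real \<times> 'w::euclidean_space \<times> real \<Rightarrow> real \<times> 'w \<times> real \<Rightarrow> real \<times> 'w \<times> real"
  assumes "involution_metric_algebra br dext_swap"
  shows "involution_metric_algebra.metric (dext_swap :: real \<times> 'w \<times> real \<Rightarrow> _) = dext_form"
  using assms by (intro ext) (simp add: involution_metric_algebra.metric_def dext_form_eq_inner_swap)

lemma levi_civita_unique:
  assumes "bilinear g" and "nondegenerate_form g"
    and "\<And>w. 2 * g z w = g (br u v) w + g (br w u) v + g (br w v) u"
  shows "levi_civita br g u v = z"
  unfolding levi_civita_def
proof (rule the_equality)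
  fix z' assume z': "\<forall>w. 2 * g z' w = g (br u v) w + g (br w u) v + g (br w v) u"
  have "g (z' - z) w = 0" for w
    using assms(3)[of w] z'[rule_format, of w] bilinear_lsub[OF assms(1)] by simp
  then have "z' - z = 0" using assms(2) unfolding nondegenerate_form_def by blast
  then show "z' = z" by simp
qed (use assms(3) in auto)

lemma isometric_lie_iso_inv:
  assumes "isometric_lie_iso br g br2 g2 \<phi>"
  shows "linear \<phi>" "linear (inv \<phi>)" "inv \<phi> (\<phi> x) = x" "\<phi> (inv \<phi> y) = y"
    and "br2 X Y = \<phi> (br (inv \<phi> X) (inv \<phi> Y))" "g2 X Y = g (inv \<phi> X) (inv \<phi> Y)"
proof -
  have lin: "linear \<phi>" and bij: "bij \<phi>" and hom: "\<And>x y. \<phi> (br x y) = br2 (\<phi> x) (\<phi> y)"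
    and isom: "\<And>x y. g2 (\<phi> x) (\<phi> y) = g x y"
    using assms by (auto simp: isometric_lie_iso_def)
  have right: "\<phi> (inv \<phi> y) = y" for y using bij by (simp add: bij_is_surj surj_f_inv_f)
  show "linear \<phi>" "inv \<phi> (\<phi> x) = x" "\<phi> (inv \<phi> y) = y"
    using lin bij right by (simp_all add: bij_is_inj)
  show "linear (inv \<phi>)" using lin bij by (rule linear_inv)
  show "br2 X Y = \<phi> (br (inv \<phi> X) (inv \<phi> Y))" "g2 X Y = g (inv \<phi> X) (inv \<phi> Y)"
    using hom[of "inv \<phi> X" "inv \<phi> Y"] isom[of "inv \<phi> X" "inv \<phi> Y"] by (simp_all add: right)
qed

lemma isometric_lie_iso_pullback:
  fixes \<psi> :: "'u::euclidean_space \<Rightarrow> 'v::euclidean_space"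
  assumes "linear \<psi>" and "bij \<psi>" and "\<And>X Y. g (\<psi> X) (\<psi> Y) = g' X Y"
  shows "isometric_lie_iso br g (\<lambda>X Y. inv \<psi> (br (\<psi> X) (\<psi> Y))) g' (inv \<psi>)"
proof -
  have "\<psi> (inv \<psi> x) = x" for x using assms(2) by (simp add: bij_is_surj surj_f_inv_f)
  then show ?thesis
    using linear_inv[OF assms(1,2)] bij_imp_bij_inv[OF assms(2)]
    unfolding isometric_lie_iso_def by (simp flip: assms(3))
qed

lemma lin_trace_isometric_lie_iso:
  assumes "isometric_lie_iso br g br2 g2 \<phi>" and "linear F"
  shows "lin_trace (\<lambda>W. \<phi> (F (inv \<phi> W))) = lin_trace F"
proof -
  note inv = isometric_lie_iso_inv[OF assms(1)]
  have "linear (\<lambda>W. \<phi> (F (inv \<phi> W)))"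
    using linear_compose[OF linear_compose[OF inv(2) assms(2)] inv(1)] by (simp add: o_def)
  from lin_trace_conjugate[OF inv(1,2) inv(4) this] show ?thesis by (simp add: inv(3))
qed

lemma isometric_lie_iso_lie_bracket:
  assumes iso: "isometric_lie_iso br g br2 g2 \<phi>" and "lie_bracket br"
  shows "lie_bracket br2"
proof -
  note inv = isometric_lie_iso_inv[OF iso]
  have bil: "bilinear br" and antisym: "\<And>x y. br x y = - br y x"
    and jacobi: "\<And>x y z. br x (br y z) + br y (br z x) + br z (br x y) = 0"
    using assms(2) unfolding lie_bracket_def by blast+
  interpret bilinear_map br by unfold_locales (fact bil)
  have "linear (\<lambda>Y. \<phi> (br x (inv \<phi> Y)))" "linear (\<lambda>X. \<phi> (br (inv \<phi> X) y))" for x y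
    using linear_compose[OF linear_compose[OF inv(2) linear_right] inv(1)]
      linear_compose[OF linear_compose[OF inv(2) linear_left] inv(1)]
    by (simp_all add: o_def)
  then have "bilinear br2" unfolding bilinear_def inv(5) by blast
  moreover have "br2 X Y = - br2 Y X" for X Y
    using antisym[of "inv \<phi> X" "inv \<phi> Y"] by (simp add: inv(5) linear_neg[OF inv(1)])
  moreover have "br2 X (br2 Y Z) + br2 Y (br2 Z X) + br2 Z (br2 X Y) = 0" for X Y Z
    using jacobi[of "inv \<phi> X" "inv \<phi> Y" "inv \<phi> Z"]
    by (simp add: inv(3,5) linear_0[OF inv(1)] flip: linear_add[OF inv(1)])
  ultimately show ?thesis unfolding lie_bracket_def by blast
qed

lemma isometric_lie_iso_unimodular:
  assumes iso: "isometric_lie_iso br g br2 g2 \<phi>" and "bilinear br" and "unimodular br"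
  shows "unimodular br2"
  unfolding unimodular_def
proof
  fix X
  have "linear (br (inv \<phi> X))" using assms(2) by (simp add: bilinear_def)
  moreover have "br2 X = (\<lambda>W. \<phi> (br (inv \<phi> X) (inv \<phi> W)))"
    by (rule ext) (rule isometric_lie_iso_inv(5)[OF iso])
  ultimately show "lin_trace (br2 X) = 0"
    using lin_trace_isometric_lie_iso[OF iso] assms(3) by (simp add: unimodular_def)
qed

lemma isometric_lie_iso_killing_form:
  assumes iso: "isometric_lie_iso br g br2 g2 \<phi>" and "bilinear br"
  shows "killing_form br2 X X = killing_form br (inv \<phi> X) (inv \<phi> X)"
proof -
  interpret bilinear_map br by unfold_locales fact
  have "linear (\<lambda>w. br (inv \<phi> X) (br (inv \<phi> X) w))"
    by (intro linear_precomp_right linear_right)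
  from lin_trace_isometric_lie_iso[OF iso this] show ?thesis
    by (simp add: killing_form_def isometric_lie_iso_inv[OF iso])
qed

lemma ricci_form_isometric_lie_iso:
  assumes iso: "isometric_lie_iso br g br2 g2 \<phi>"
    and g: "bilinear g" "nondegenerate_form g" and "bilinear br2"
    and koszul: "\<And>U V W. 2 * g2 (levi_civita br2 g2 U V) W = g2 (br2 U V) W + g2 (br2 W U) V + g2 (br2 W V) U"
    and "bilinear (levi_civita br2 g2)"
  shows "ricci_form br g u v = ricci_form br2 g2 (\<phi> u) (\<phi> v)"
proof -
  note inv = isometric_lie_iso_inv[OF iso]
  have hom: "\<phi> (br x y) = br2 (\<phi> x) (\<phi> y)" and isom: "g2 (\<phi> x) (\<phi> y) = g x y" for x y
    using iso by (simp_all add: isometric_lie_iso_def)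
  let ?L2 = "levi_civita br2 g2"
  have lc: "levi_civita br g x y = inv \<phi> (?L2 (\<phi> x) (\<phi> y))" for x y
    using koszul[of "\<phi> x" "\<phi> y" "\<phi> w" for w]
    by (intro levi_civita_unique[OF g]) (simp add: inv(4) hom[symmetric] isom[symmetric])
  define F where "F W = curvature br2 g2 (\<phi> u) W (\<phi> v)" for W
  have curvature: "curvature br g u w v = inv \<phi> (F (\<phi> w))" for w
    unfolding curvature_def Let_def F_def lc hom inv(4)
    by (simp add: linear_diff[OF inv(2)])
  have "linear F"
  proof -
    interpret b2: bilinear_map br2 by unfold_locales fact
    interpret l2: bilinear_map ?L2 by unfold_locales fact
    show ?thesis
      unfolding F_def curvature_def Let_def
      by (intro linear_compose_sub l2.linear_precomp_left l2.linear_precomp_right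
          b2.linear_right l2.linear_left l2.linear_right)
  qed
  have "ricci_form br g u v = lin_trace (\<lambda>w. inv \<phi> (F (\<phi> w)))"
    unfolding ricci_form_def curvature ..
  also have "\<dots> = lin_trace F"
    by (rule lin_trace_conjugate[OF inv(1,2,4) \<open>linear F\<close>, symmetric])
  finally show ?thesis unfolding ricci_form_def F_def .
qed

lemma ricci_form_dext_iso:
  assumes iso: "isometric_lie_iso br g br2 dext_form \<phi>" and "lorentzian_form g" and "lie_bracket br2"
  shows "ricci_form br g u v = ricci_form br2 dext_form (\<phi> u) (\<phi> v)"
proof -
  have br2: "bilinear br2" "\<And>x y. br2 x y = - br2 y x"
    using assms(3) unfolding lie_bracket_def by blast+
  interpret involution_metric_algebra br2 dext_swap
    using involution_metric_algebra_dext[OF br2] .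
  have "metric = dext_form"
    using involution_metric_algebra_dext_metric[OF involution_metric_algebra_dext[OF br2]] .
  then show ?thesis
    using assms(2) levi_civita_koszul levi_civita_bilinear
    by (intro ricci_form_isometric_lie_iso[OF iso _ _ br2(1)]) (auto simp: lorentzian_form_def)
qed

lemma dext_iso_einstein_iff:
  assumes iso: "isometric_lie_iso br g br2 dext_form \<phi>" and "lorentzian_form g" and "lie_bracket br2"
  shows "einstein br g \<longleftrightarrow> einstein br2 dext_form"
    and "ricci_flat br g \<longleftrightarrow> ricci_flat br2 dext_form"
proof -
  note ric = ricci_form_dext_iso[OF assms]
  note inv = isometric_lie_iso_inv[OF iso]
  have ric': "ricci_form br2 dext_form X Y = ricci_form br g (inv \<phi> X) (inv \<phi> Y)" for X Y
    using ric[of "inv \<phi> X" "inv \<phi> Y"] by (simp add: inv(4))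
  have form: "dext_form (\<phi> x) (\<phi> y) = g x y" for x y
    using iso by (simp add: isometric_lie_iso_def)
  show "einstein br g \<longleftrightarrow> einstein br2 dext_form"
    unfolding einstein_def using ric ric' form inv(6) by metis
  show "ricci_flat br g \<longleftrightarrow> ricci_flat br2 dext_form"
    unfolding ricci_flat_def using ric ric' by metis
qed

abbreviation dext_e :: "real \<times> 'w::zero \<times> real" where "dext_e \<equiv> (1, 0, 0)"
abbreviation dext_ebar :: "real \<times> 'w::zero \<times> real" where "dext_ebar \<equiv> (0, 0, 1)"

definition g0_incl :: "'w::zero \<Rightarrow> real \<times> 'w \<times> real" where "g0_incl u = (0, u, 0)"
definition g0_part :: "real \<times> 'w \<times> real \<Rightarrow> 'w" where "g0_part X = fst (snd X)"

lemma linear_g0_incl: "linear g0_incl"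
  by (rule linearI) (simp_all add: g0_incl_def)

lemma linear_g0_part: "linear g0_part"
  by (rule linearI) (simp_all add: g0_part_def)

lemma dext_decompose: "X = fst X *\<^sub>R dext_e + g0_incl (g0_part X) + snd (snd X) *\<^sub>R dext_ebar"
  by (cases X) (simp add: g0_incl_def g0_part_def)

lemma sum_Basis_dext:
  "(\<Sum>k\<in>(Basis :: (real \<times> 'w::euclidean_space \<times> real) set). f k)
     = f dext_e + f dext_ebar + (\<Sum>b\<in>Basis. f (g0_incl b))"
proof -
  have B: "(Basis :: (real \<times> 'w \<times> real) set) = insert dext_e (insert dext_ebar (g0_incl ` Basis))"
    by (auto simp: Basis_prod_def g0_incl_def zero_prod_def)
  have inj: "inj_on (g0_incl :: 'w \<Rightarrow> _) Basis" by (auto simp: inj_on_def g0_incl_def)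
  have "dext_e \<notin> insert dext_ebar (g0_incl ` (Basis :: 'w set))" "dext_ebar \<notin> g0_incl ` (Basis :: 'w set)"
    by (auto simp: g0_incl_def)
  then show ?thesis
    unfolding B by (simp add: sum.reindex[OF inj] add.assoc)
qed

lemma inner_dext_simps [simp]:
  "inner Z dext_e = fst Z" "inner Z dext_ebar = snd (snd Z)" "inner Z (g0_incl b) = inner (g0_part Z) b"
  by (simp_all add: inner_prod_def g0_incl_def g0_part_def)

lemma linear_zero_on_g0:
  assumes "linear h" and "\<And>b. b \<in> Basis \<Longrightarrow> h (g0_incl b) = 0"
  shows "h (g0_incl u) = 0"
proof -
  have "h (g0_incl u) = (\<Sum>b\<in>Basis. inner u b *\<^sub>R h (g0_incl b))"
    using linear_sum_scaleR[OF linear_compose[OF linear_g0_incl assms(1)], of "inner u" "\<lambda>b. b" Basis]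
    by (simp add: euclidean_representation)
  then show ?thesis by (simp add: assms(2))
qed

lemma inner_sum_Basis_linear:
  fixes l :: "'w::euclidean_space \<Rightarrow> real"
  assumes "linear l"
  shows "inner (\<Sum>b\<in>Basis. l b *\<^sub>R b) u = l u"
proof -
  have "l u = l (\<Sum>b\<in>Basis. inner u b *\<^sub>R b)" by (simp add: euclidean_representation)
  also have "\<dots> = (\<Sum>b\<in>Basis. inner u b * l b)"
    using linear_sum_scaleR[OF assms, of "inner u" "\<lambda>b. b" Basis] by simp
  finally show ?thesis by (simp add: inner_sum_left mult.commute inner_commute[of u])
qed

lemma dext_swap_simps [simp]:
  "dext_swap dext_e = dext_ebar" "dext_swap dext_ebar = dext_e" "dext_swap (g0_incl u) = g0_incl u"
  by (simp_all add: dext_swap_def g0_incl_def)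

lemma g0_part_simps [simp]:
  "g0_part (a, u, c) = u" "g0_part (g0_incl u) = u" "g0_part (- X) = - g0_part X" "g0_part 0 = 0"
  by (simp_all add: g0_part_def g0_incl_def)

text \<open>The assumption on brackets says that \<open>dext_e\<close> is orthogonal to the derived algebra;
  nonnegativity of the Killing form is what complete solvability contributes.\<close>

locale witt_model =
  unimodular_involution_metric_algebra br dext_swap
  for br :: "real \<times> 'w::euclidean_space \<times> real \<Rightarrow> real \<times> 'w \<times> real \<Rightarrow> real \<times> 'w \<times> real" +
  assumes ebar_coord_bracket [simp]: "snd (snd (br X Y)) = 0"
    and killing_nonneg: "killing_form br X X \<ge> 0"
begin

lemma metric_eq_dext_form: "metric = dext_form"
  by (intro ext) (simp add: metric_def dext_form_eq_inner_swap)

lemma metric_e_ebar [simp]: "metric dext_e dext_ebar = 1"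
  by (simp add: metric_def)

lemma metric_e [simp]: "metric Z dext_e = snd (snd Z)"
  and metric_g0 [simp]: "metric Z (g0_incl b) = inner (g0_part Z) b"
  and metric_e_line: "g0_part Z = 0 \<Longrightarrow> snd (snd Z) = 0 \<Longrightarrow> metric Z W = fst Z * snd (snd W)"
  and metric_self: "snd (snd Z) = 0 \<Longrightarrow> metric Z Z = inner (g0_part Z) (g0_part Z)"
  by (simp_all add: metric_eq_dext_form dext_form_def g0_incl_def g0_part_def case_prod_unfold)

lemma structure_pairing_e: "structure_pairing dext_e v = 0"
  by (simp add: structure_pairing_def)

lemma ad_pairing_e_e:
  "ad_pairing dext_e dext_e = (\<Sum>b\<in>Basis. inner (g0_part (br dext_e (g0_incl b))) (g0_part (br dext_e (g0_incl b))))"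
  unfolding ad_pairing_def sum_Basis_dext by (simp add: metric_self)

end

section \<open>Einstein Witt models are flat double extensions\<close>

locale einstein_witt_model = witt_model +
  fixes c :: real
  assumes einstein_const: "ricci_form br dext_form X Y = c * dext_form X Y"
begin

lemma einstein_metric: "ricci_form br metric X Y = c * metric X Y"
  using einstein_const by (simp add: metric_eq_dext_form)

lemma killing_e_e: "killing_form br dext_e dext_e = 0"
  and g0_part_bracket_e_basis: "b \<in> Basis \<Longrightarrow> g0_part (br dext_e (g0_incl b)) = 0"
proof -
  have "killing_form br dext_e dext_e + ad_pairing dext_e dext_e = 0"
    using einstein_metric[of dext_e dext_e] unfolding ricci_form_formula structure_pairing_e by simp
  moreover have "ad_pairing dext_e dext_e \<ge> 0" unfolding ad_pairing_e_e by (intro sum_nonneg) simp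
  moreover note killing_nonneg[of dext_e]
  ultimately have "killing_form br dext_e dext_e = 0" and "ad_pairing dext_e dext_e = 0" by linarith+
  then show "killing_form br dext_e dext_e = 0" and "b \<in> Basis \<Longrightarrow> g0_part (br dext_e (g0_incl b)) = 0"
    unfolding ad_pairing_e_e by (auto simp: sum_nonneg_eq_0_iff)
qed

lemma killing_e: "killing_form br dext_e Y = 0" "killing_form br Y dext_e = 0"
  using killing_form_zero_if_nonneg[OF bracket.bilinear killing_nonneg killing_e_e]
    killing_form_sym[OF bracket.bilinear, of Y dext_e] by simp_all

lemma g0_part_bracket_e: "g0_part (br dext_e (g0_incl u)) = 0"
  using linear_zero_on_g0[OF bracket.linear_postcomp_right[OF linear_g0_part] g0_part_bracket_e_basis] .

lemma g0_part_bracket_g0_e: "g0_part (br (g0_incl u) dext_e) = 0"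
  using g0_part_bracket_e[of u] by (simp add: antisym[of "g0_incl u"])

definition e_ebar_g0 where "e_ebar_g0 = g0_part (br dext_e dext_ebar)"

lemma einstein_const_eq: "c = inner e_ebar_g0 e_ebar_g0 / 2"
proof -
  have "metric (br dext_e (g0_incl b)) (br dext_ebar (g0_incl b)) = 0" if "b \<in> Basis" for b
    using metric_e_line[OF g0_part_bracket_e ebar_coord_bracket] by simp
  then have "ad_pairing dext_e dext_ebar = - inner e_ebar_g0 e_ebar_g0"
    unfolding ad_pairing_def sum_Basis_dext
    by (simp add: antisym[of dext_ebar dext_e] metric_self e_ebar_g0_def)
  then show ?thesis
    using einstein_metric[of dext_e dext_ebar] unfolding ricci_form_formula structure_pairing_e killing_e
    by simp
qed

lemma ad_pairing_g0:
  "ad_pairing (g0_incl b) (g0_incl b)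
     = (\<Sum>b'\<in>Basis. inner (g0_part (br (g0_incl b) (g0_incl b'))) (g0_part (br (g0_incl b) (g0_incl b'))))"
proof -
  have "metric (br (g0_incl b) dext_e) (br X Y) = 0" for X Y
    using metric_e_line[OF g0_part_bracket_g0_e ebar_coord_bracket] by simp
  then show ?thesis
    unfolding ad_pairing_def sum_Basis_dext by (simp add: metric.sym[of _ "br (g0_incl b) dext_e"] metric_self)
qed

lemma structure_pairing_g0:
  "structure_pairing (g0_incl b) (g0_incl b) = - 2 * (inner e_ebar_g0 b * inner e_ebar_g0 b)
     + (\<Sum>b1\<in>Basis. \<Sum>b2\<in>Basis. inner (g0_part (br (g0_incl b1) (g0_incl b2))) b
         * inner (g0_part (br (g0_incl b1) (g0_incl b2))) b)"
  unfolding structure_pairing_def sum_Basis_dext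
  by (simp add: g0_part_bracket_e g0_part_bracket_g0_e antisym[of dext_ebar dext_e] flip: e_ebar_g0_def)

lemma ricci_trace_g0:
  "(\<Sum>b\<in>Basis. ricci_form br metric (g0_incl b) (g0_incl b))
     = - (\<Sum>b\<in>Basis. killing_form br (g0_incl b) (g0_incl b)) / 2
       - (\<Sum>b1\<in>Basis. \<Sum>b2\<in>Basis. inner (g0_part (br (g0_incl b1) (g0_incl b2))) (g0_part (br (g0_incl b1) (g0_incl b2)))) / 4
       - inner e_ebar_g0 e_ebar_g0 / 2"
proof -
  let ?P = "\<lambda>b1 b2. g0_part (br (g0_incl b1) (g0_incl b2))"
  have "(\<Sum>b\<in>Basis. structure_pairing (g0_incl b) (g0_incl b))
      = - 2 * inner e_ebar_g0 e_ebar_g0 + (\<Sum>b1\<in>Basis. \<Sum>b2\<in>Basis. inner (?P b1 b2) (?P b1 b2))"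
  proof -
    have "(\<Sum>b\<in>Basis. \<Sum>b1\<in>Basis. \<Sum>b2\<in>Basis. inner (?P b1 b2) b * inner (?P b1 b2) b)
        = (\<Sum>b1\<in>Basis. \<Sum>b\<in>Basis. \<Sum>b2\<in>Basis. inner (?P b1 b2) b * inner (?P b1 b2) b)"
      by (rule sum.swap)
    also have "\<dots> = (\<Sum>b1\<in>Basis. \<Sum>b2\<in>Basis. \<Sum>b\<in>Basis. inner (?P b1 b2) b * inner (?P b1 b2) b)"
      by (rule sum.cong[OF refl], rule sum.swap)
    also have "\<dots> = (\<Sum>b1\<in>Basis. \<Sum>b2\<in>Basis. inner (?P b1 b2) (?P b1 b2))"
      by (simp add: euclidean_inner[symmetric])
    finally have "(\<Sum>b\<in>Basis. \<Sum>b1\<in>Basis. \<Sum>b2\<in>Basis. inner (?P b1 b2) b * inner (?P b1 b2) b)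
        = (\<Sum>b1\<in>Basis. \<Sum>b2\<in>Basis. inner (?P b1 b2) (?P b1 b2))" .
    moreover have "(\<Sum>b\<in>Basis. inner e_ebar_g0 b * inner e_ebar_g0 b) = inner e_ebar_g0 e_ebar_g0"
      by (simp add: euclidean_inner[symmetric])
    ultimately show ?thesis
      unfolding structure_pairing_g0 sum.distrib by (simp add: sum_negf sum_distrib_left[symmetric])
  qed
  moreover have "(\<Sum>b\<in>Basis. ricci_form br metric (g0_incl b) (g0_incl b))
      = - (\<Sum>b\<in>Basis. killing_form br (g0_incl b) (g0_incl b)) / 2
        - (\<Sum>b\<in>Basis. ad_pairing (g0_incl b) (g0_incl b)) / 2
        + (\<Sum>b\<in>Basis. structure_pairing (g0_incl b) (g0_incl b)) / 4"
    unfolding ricci_form_formula by (simp add: sum.distrib sum_subtractf sum_divide_distrib sum_negf)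
  ultimately show ?thesis
    unfolding ad_pairing_g0 by (simp add: field_simps)
qed

lemma e_ebar_g0_zero: "e_ebar_g0 = 0"
  and einstein_const_zero: "c = 0"
  and g0_part_bracket_g0_basis: "b1 \<in> Basis \<Longrightarrow> b2 \<in> Basis \<Longrightarrow> g0_part (br (g0_incl b1) (g0_incl b2)) = 0"
proof -
  let ?P = "\<lambda>b1 b2. g0_part (br (g0_incl b1) (g0_incl b2))"
  let ?A = "\<Sum>b1\<in>Basis. \<Sum>b2\<in>Basis. inner (?P b1 b2) (?P b1 b2)"
  \<comment> \<open>ricci_trace_g0 equates a nonnegative quantity with a sum of nonpositive ones\<close>
  have "(\<Sum>b\<in>Basis. ricci_form br metric (g0_incl b) (g0_incl b)) \<ge> 0"
    by (intro sum_nonneg) (simp add: einstein_metric einstein_const_eq)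
  moreover have "(\<Sum>b\<in>Basis. killing_form br (g0_incl b) (g0_incl b)) \<ge> 0"
    by (intro sum_nonneg killing_nonneg)
  moreover have "?A \<ge> 0" by (intro sum_nonneg) simp
  ultimately have "inner e_ebar_g0 e_ebar_g0 = 0" and A: "?A = 0"
    using ricci_trace_g0 inner_ge_zero[of e_ebar_g0] by linarith+
  then show "e_ebar_g0 = 0" and "c = 0" by (simp_all add: einstein_const_eq)
  show "?P b1 b2 = 0" if "b1 \<in> Basis" "b2 \<in> Basis" for b1 b2
    using A that by (simp add: sum_nonneg_eq_0_iff sum_nonneg)
qed

lemma g0_part_bracket_g0: "g0_part (br (g0_incl u) (g0_incl v)) = 0"
proof -
  have "g0_part (br (g0_incl u) (g0_incl b)) = 0" if "b \<in> Basis" for b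
    using linear_zero_on_g0[OF bracket.linear_postcomp_left[OF linear_g0_part]] g0_part_bracket_g0_basis that
    by blast
  then show ?thesis
    using linear_zero_on_g0[OF bracket.linear_postcomp_right[OF linear_g0_part]] by blast
qed

lemma e_coord_bracket_g0_e_basis: "b \<in> Basis \<Longrightarrow> fst (br (g0_incl b) dext_e) = 0"
  using unimodular[of "g0_incl b"] unfolding lin_trace_def sum_Basis_dext
  by (simp add: g0_part_bracket_g0)

lemma bracket_g0_e: "br (g0_incl u) dext_e = 0"
proof -
  have "fst (br (g0_incl u) dext_e) = 0"
    using linear_zero_on_g0[OF bracket.linear_postcomp_left[OF linear_fst]] e_coord_bracket_g0_e_basis
    by blast
  then show ?thesis
    using g0_part_bracket_g0_e[of u] ebar_coord_bracket[of "g0_incl u" dext_e]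
    by (simp add: prod_eq_iff g0_part_def)
qed

lemma bracket_e_g0: "br dext_e (g0_incl u) = 0"
  using bracket_g0_e[of u] by (simp add: antisym[of dext_e])

definition dext_mu :: real where "dext_mu = fst (br dext_ebar dext_e)"
definition dext_D where "dext_D u = g0_part (br dext_ebar (g0_incl u))"
definition dext_K where "dext_K u = (\<Sum>b\<in>Basis. fst (br (g0_incl u) (g0_incl b)) *\<^sub>R b)"
definition dext_b where "dext_b = (\<Sum>b\<in>Basis. fst (br dext_ebar (g0_incl b)) *\<^sub>R b)"

lemma linear_e_coord_bracket_g0: "linear (\<lambda>v. fst (br X (g0_incl v)))" "linear (\<lambda>u. fst (br (g0_incl u) Y))"
  using linear_compose[OF linear_g0_incl bracket.linear_postcomp_right[OF linear_fst]]
    linear_compose[OF linear_g0_incl bracket.linear_postcomp_left[OF linear_fst]]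
  by (simp_all add: o_def)

lemma linear_dext_D: "linear dext_D"
  using linear_compose[OF linear_g0_incl bracket.linear_postcomp_right[OF linear_g0_part]]
  by (simp add: o_def dext_D_def[abs_def])

lemma inner_dext_K: "inner (dext_K u) v = fst (br (g0_incl u) (g0_incl v))"
  unfolding dext_K_def by (rule inner_sum_Basis_linear[OF linear_e_coord_bracket_g0(1)])

lemma inner_dext_b: "inner dext_b u = fst (br dext_ebar (g0_incl u))"
  unfolding dext_b_def by (rule inner_sum_Basis_linear[OF linear_e_coord_bracket_g0(1)])

lemma linear_dext_K: "linear dext_K"
  unfolding dext_K_def
  by (rule linearI) (simp_all add: linear_add[OF linear_e_coord_bracket_g0(2)] linear_scale[OF linear_e_coord_bracket_g0(2)]
      scaleR_add_left sum.distrib scaleR_sum_right)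

lemma dext_K_skew: "inner (dext_K u) v = - inner u (dext_K v)"
  unfolding inner_dext_K inner_commute[of u] by (simp add: antisym[of "g0_incl u"])

lemma bracket_ebar_e: "br dext_ebar dext_e = (dext_mu, 0, 0)"
proof -
  have "g0_part (br dext_ebar dext_e) = 0"
    using e_ebar_g0_zero by (simp add: e_ebar_g0_def antisym[of dext_ebar])
  then show ?thesis
    using ebar_coord_bracket[of dext_ebar dext_e]
    by (cases "br dext_ebar dext_e") (simp add: dext_mu_def g0_part_def)
qed

lemma bracket_e_ebar: "br dext_e dext_ebar = (- dext_mu, 0, 0)"
  using bracket_ebar_e by (simp add: antisym[of dext_e])

lemma bracket_g0_g0: "br (g0_incl u) (g0_incl v) = (inner (dext_K u) v, 0, 0)"
  using g0_part_bracket_g0[of u v] ebar_coord_bracket[of "g0_incl u" "g0_incl v"]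
  by (cases "br (g0_incl u) (g0_incl v)") (simp add: inner_dext_K g0_part_def)

lemma bracket_ebar_g0: "br dext_ebar (g0_incl u) = (inner dext_b u, dext_D u, 0)"
  using ebar_coord_bracket[of dext_ebar "g0_incl u"]
  by (cases "br dext_ebar (g0_incl u)") (simp add: inner_dext_b dext_D_def g0_part_def)

lemma bracket_g0_ebar: "br (g0_incl u) dext_ebar = (- inner dext_b u, - dext_D u, 0)"
  using bracket_ebar_g0[of u] by (simp add: antisym[of "g0_incl u"])

lemma bracket_eq_dext_bracket: "br X Y = dext_bracket dext_K dext_D dext_mu dext_b X Y"
proof -
  obtain a1 u1 c1 a2 u2 c2 where X: "X = (a1, u1, c1)" and Y: "Y = (a2, u2, c2)" by (metis prod.exhaust)
  have "br X Y = br (a1 *\<^sub>R dext_e + g0_incl u1 + c1 *\<^sub>R dext_ebar) (a2 *\<^sub>R dext_e + g0_incl u2 + c2 *\<^sub>R dext_ebar)"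
    using dext_decompose[of X] dext_decompose[of Y] by (simp add: X Y g0_part_def)
  also have "\<dots> = dext_bracket dext_K dext_D dext_mu dext_b X Y"
    by (simp only: bracket.add_left bracket.add_right bracket.scale_left bracket.scale_right br_self
        bracket_e_g0 bracket_g0_e bracket_ebar_e bracket_e_ebar bracket_g0_g0 bracket_ebar_g0 bracket_g0_ebar)
      (simp add: X Y dext_bracket_def algebra_simps)
  finally show ?thesis .
qed

lemma dext_mu_eq: "dext_mu = - lin_trace dext_D"
  using unimodular[of dext_ebar] unfolding lin_trace_def[of "br dext_ebar"] sum_Basis_dext
  by (simp add: bracket_ebar_e bracket_ebar_g0 lin_trace_def)

lemma bracket_eq_double_extension: "br = dext_bracket dext_K dext_D (- lin_trace dext_D) dext_b"
  by (intro ext) (simp add: bracket_eq_dext_bracket dext_mu_eq)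

lemma ricci_flat: "ricci_flat br dext_form"
  using einstein_const einstein_const_zero by (simp add: ricci_flat_def)

end

lemma witt_model_einstein_double_extension:
  assumes "witt_model br" and "lie_bracket br" and "einstein br dext_form"
  shows "ricci_flat br dext_form"
    and "\<exists>K D b. admissible K D (- lin_trace D) b \<and> br = dext_bracket K D (- lin_trace D) b"
proof -
  obtain c where "\<And>X Y. ricci_form br dext_form X Y = c * dext_form X Y"
    using assms(3) by (auto simp: einstein_def)
  with assms(1) interpret einstein_witt_model br c
    by (simp add: einstein_witt_model_def einstein_witt_model_axioms_def)
  show "ricci_flat br dext_form" by (rule ricci_flat)
  have "admissible dext_K dext_D (- lin_trace dext_D) dext_b"
    unfolding admissible_def bracket_eq_double_extension[symmetric]
    using linear_dext_K linear_dext_D dext_K_skew assms(2,3) by blast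
  with bracket_eq_double_extension
  show "\<exists>K D b. admissible K D (- lin_trace D) b \<and> br = dext_bracket K D (- lin_trace D) b" by blast
qed

section \<open>Reduction to the Witt model\<close>

lemma degenerate_derived_witt_model:
  fixes br :: "'v::euclidean_space \<Rightarrow> 'v \<Rightarrow> 'v" and g :: "'v \<Rightarrow> 'v \<Rightarrow> real"
  assumes dim: "DIM('v) = DIM('w) + 2"
    and lie: "lorentzian_lie_algebra br g" and "completely_solvable br" and "unimodular br"
    and "degenerate_on g (derived_algebra br)"
  obtains br' :: "real \<times> 'w::euclidean_space \<times> real \<Rightarrow> real \<times> 'w \<times> real \<Rightarrow> real \<times> 'w \<times> real" and \<phi>
  where "isometric_lie_iso br g br' dext_form \<phi>" and "lie_bracket br'" and "witt_model br'"
proof -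
  have lb: "lie_bracket br" and g: "lorentzian_form g"
    using lie by (auto simp: lorentzian_lie_algebra_def)
  have bil: "bilinear br" using lb by (simp add: lie_bracket_def)
  obtain e where e: "e \<in> derived_algebra br" "e \<noteq> 0" and e_orth: "\<And>y. y \<in> derived_algebra br \<Longrightarrow> g e y = 0"
    using assms(5) unfolding degenerate_on_def by blast
  have e_orth_bracket: "g (br x y) e = 0" for x y
    using e_orth[of "br x y"] g unfolding derived_algebra_def lorentzian_form_def
    by (metis (mono_tags, lifting) mem_Collect_eq span_base)
  obtain \<psi> :: "real \<times> 'w \<times> real \<Rightarrow> 'v"
    where \<psi>: "linear \<psi>" "bij \<psi>" "\<And>X Y. g (\<psi> X) (\<psi> Y) = dext_form X Y" "\<psi> (1, 0, 0) = e"
    using witt_frame_exists[OF g dim e(2) e_orth[OF e(1)]] by blast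
  define br' where "br' X Y = inv \<psi> (br (\<psi> X) (\<psi> Y))" for X Y
  have iso: "isometric_lie_iso br g br' dext_form (inv \<psi>)"
    unfolding br'_def[abs_def] by (rule isometric_lie_iso_pullback[where g = g, OF \<psi>(1-3)])
  have lb': "lie_bracket br'" by (rule isometric_lie_iso_lie_bracket[OF iso lb])
  then have bil': "bilinear br'" and antisym': "\<And>x y. br' x y = - br' y x"
    unfolding lie_bracket_def by blast+
  have "snd (snd (br' X Y)) = 0" for X Y
  proof -
    have "\<psi> (br' X Y) = br (\<psi> X) (\<psi> Y)" using \<psi>(2) by (simp add: br'_def bij_is_surj surj_f_inv_f)
    then have "dext_form (br' X Y) (1, 0, 0) = 0" using \<psi>(3,4) e_orth_bracket by metis
    then show ?thesis by (simp add: dext_form_def case_prod_unfold)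
  qed
  moreover have "killing_form br' X X \<ge> 0" for X
    using isometric_lie_iso_killing_form[OF iso bil] completely_solvable_killing_form_nonneg[OF bil assms(3)]
    by simp
  moreover have "unimodular br'" by (rule isometric_lie_iso_unimodular[OF iso bil assms(4)])
  ultimately have "witt_model br'"
    using involution_metric_algebra_dext[OF bil' antisym']
    by (simp add: witt_model_def witt_model_axioms_def unimodular_involution_metric_algebra_def
        unimodular_involution_metric_algebra_axioms_def unimodular_def)
  with iso lb' that show ?thesis by blast
qed

theorem theorem4p3:
  fixes br :: "'v::euclidean_space \<Rightarrow> 'v \<Rightarrow> 'v" and g :: "'v \<Rightarrow> 'v \<Rightarrow> real"
  assumes "DIM('v) = DIM('w::euclidean_space) + 2"
    and "lorentzian_lie_algebra br g"
    and "completely_solvable br"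
    and "unimodular br"
    and "degenerate_on g (derived_algebra br)"
  shows "(einstein br g \<longleftrightarrow>
           (\<exists>(K::'w \<Rightarrow> 'w) D b \<phi>. admissible K D (- lin_trace D) b
              \<and> isometric_lie_iso br g (dext_bracket K D (- lin_trace D) b) dext_form \<phi>))
         \<and> (einstein br g \<longrightarrow> ricci_flat br g)"
proof -
  have g: "lorentzian_form g" using assms(2) by (simp add: lorentzian_lie_algebra_def)
  obtain br' :: "real \<times> 'w \<times> real \<Rightarrow> real \<times> 'w \<times> real \<Rightarrow> real \<times> 'w \<times> real" and \<phi>
    where iso: "isometric_lie_iso br g br' dext_form \<phi>" and "lie_bracket br'" and "witt_model br'"
    using degenerate_derived_witt_model[OF assms] by blast
  note transfer = dext_iso_einstein_iff[OF iso g \<open>lie_bracket br'\<close>]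
  have forward: "ricci_flat br g \<and> (\<exists>(K::'w \<Rightarrow> 'w) D b \<phi>. admissible K D (- lin_trace D) b
      \<and> isometric_lie_iso br g (dext_bracket K D (- lin_trace D) b) dext_form \<phi>)" if "einstein br g"
    using witt_model_einstein_double_extension[OF \<open>witt_model br'\<close> \<open>lie_bracket br'\<close>] that iso transfer
    by metis
  have backward: "einstein br g" if "admissible K D (- lin_trace D) b"
    and "isometric_lie_iso br g (dext_bracket K D (- lin_trace D) b) dext_form \<psi>" for K :: "'w \<Rightarrow> 'w" and D b \<psi>
    using that dext_iso_einstein_iff(1)[OF that(2) g] by (simp add: admissible_def)
  show ?thesis using forward backward by blast
qed

end
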